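(* In Smoluchowski's discrete model (defined in the context), for every $t\ge0$ there exists $\nu_t>0$ such that $\mathbb{P}(n^{(N)}_t\le\nu_t)\to0$ as $N\to\infty$.
   Context: Smoluchowski's discrete model: fix $N\ge2$ and $(\alpha(N))$ with $\alpha(N)\to\infty$, $\alpha(N)/N\to0$. Particles are $[N]$; each unordered pair $\{i,j\}$ gets an independent exponential clock with parameter $1/N$; initially no links. When a clock rings the link is created unless one of its ends belongs at that moment to a cluster (connected component of created links) of size $\ge\alpha(N)$, in which case it is never created. Particles in clusters of size $<\alpha(N)$ are in solution; $n^{(N)}_t$ is the number of particles in solution at time $t$ divided by $N$. *)

theory Defs
  imports "HOL-Probability.Probability"
begin

text \<open>Particles are 0,...,N-1; unordered pairs are encoded as (i,j) with i < j < N.\<close>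
definition pairs :: "nat \<Rightarrow> (nat \<times> nat) set" where
  "pairs N = {(i,j). i < j \<and> j < N}"

definition clocks :: "nat \<Rightarrow> ((nat \<times> nat) \<Rightarrow> real) measure" where
  "clocks N = PiM (pairs N) (\<lambda>_. density lborel (exponential_density (1 / real N)))"

definition cluster :: "(nat \<times> nat) set \<Rightarrow> nat \<Rightarrow> nat set" where
  "cluster E i = {j. (i, j) \<in> (E \<union> E\<inverse>)\<^sup>*}"

definition ring :: "real \<Rightarrow> (nat \<times> nat) set \<Rightarrow> nat \<times> nat \<Rightarrow> (nat \<times> nat) set" where
  "ring a E p = (if real (card (cluster E (fst p))) < a \<and> real (card (cluster E (snd p))) < a
                 then insert p E else E)"

text \<open>Links created by time t: process the clocks that rang by time t in
  chronological order (ties, a null event, broken by a fixed enumeration of the pairs, sort_key being stable).\<close>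
definition links :: "nat \<Rightarrow> real \<Rightarrow> real \<Rightarrow> ((nat \<times> nat) \<Rightarrow> real) \<Rightarrow> (nat \<times> nat) set" where
  "links N a t \<omega> = fold (\<lambda>p E. ring a E p)
      (sort_key \<omega> (filter (\<lambda>p. \<omega> p \<le> t) [(i, j). j \<leftarrow> [0..<N], i \<leftarrow> [0..<j]])) {}"

text \<open>Fraction of particles in solution (clusters of size < a) at time t.\<close>
definition sol_frac :: "nat \<Rightarrow> real \<Rightarrow> real \<Rightarrow> ((nat \<times> nat) \<Rightarrow> real) \<Rightarrow> real" where
  "sol_frac N a t \<omega> = real (card {i \<in> {0..<N}. real (card (cluster (links N a t \<omega>) i)) < a}) / real N"

end

theory Submission
  imports Defs
begin

text \<open>A particle none of whose clocks has rung by time \<open>t\<close> forms a singleton cluster, so it is in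
  solution as soon as \<open>\<alpha>(N) > 1\<close>. Each particle is isolated with probability at least
  \<open>e^{-2t}\<close>, and two isolation events share only one clock, so
  \<open>P(A\<^sub>i \<inter> A\<^sub>j) \<le> e^{t/N} P(A\<^sub>i) P(A\<^sub>j)\<close>. Hence the number of isolated particles has
  variance \<open>O(N + N\<^sup>2(e^{t/N} - 1)) = o(N\<^sup>2)\<close>, and by Chebyshev's inequality the fraction of
  isolated particles falls below \<open>e^{-2t}/2\<close> with probability tending to 0.\<close>

lemma fold_ring_subset: "fold (\<lambda>p E. ring a E p) ps E0 \<subseteq> E0 \<union> set ps"
proof (induction ps arbitrary: E0)
  case (Cons p ps)
  have "fold (\<lambda>p E. ring a E p) ps (ring a E0 p) \<subseteq> ring a E0 p \<union> set ps"
    by (rule Cons.IH)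
  also have "\<dots> \<subseteq> E0 \<union> set (p # ps)"
    by (auto simp: ring_def)
  finally show ?case by simp
qed simp

lemma links_subset_rung: "links N a t \<omega> \<subseteq> {p \<in> pairs N. \<omega> p \<le> t}"
proof -
  let ?ps = "filter (\<lambda>p. \<omega> p \<le> t) [(i, j). j \<leftarrow> [0..<N], i \<leftarrow> [0..<j]]"
  have "links N a t \<omega> \<subseteq> set (sort_key \<omega> ?ps)"
    unfolding links_def using fold_ring_subset[of a "sort_key \<omega> ?ps" "{}"] by (simp only: Un_empty_left)
  also have "\<dots> = {p \<in> pairs N. \<omega> p \<le> t}"
    by (fastforce simp: pairs_def image_iff)
  finally show ?thesis .
qed

lemma cluster_eq_singleton:
  assumes "\<forall>p\<in>E. fst p \<noteq> i \<and> snd p \<noteq> i"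
  shows "cluster E i = {i}"
proof -
  have "j = i" if "(i, j) \<in> (E \<union> E\<inverse>)\<^sup>*" for j
    using that by (cases rule: converse_rtranclE) (use assms in force)+
  then show ?thesis by (auto simp: cluster_def)
qed

lemma finite_pairs: "finite (pairs N)"
  by (rule finite_subset[of _ "{..<N} \<times> {..<N}"]) (auto simp: pairs_def)

definition incident :: "nat \<Rightarrow> nat \<Rightarrow> (nat \<times> nat) set" where
  "incident N i = {p \<in> pairs N. fst p = i \<or> snd p = i}"

lemma card_incident_le: "card (incident N i) \<le> 2 * N"
proof -
  have "incident N i \<subseteq> Pair i ` {..<N} \<union> (\<lambda>j. (j, i)) ` {..<N}"
    by (auto simp: incident_def pairs_def)
  then have "card (incident N i) \<le> card (Pair i ` {..<N} \<union> (\<lambda>j. (j, i)) ` {..<N})"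
    by (intro card_mono) auto
  also have "\<dots> \<le> card (Pair i ` {..<N}) + card ((\<lambda>j. (j, i)) ` {..<N})"
    by (rule card_Un_le)
  also have "\<dots> \<le> N + N"
    by (intro add_mono) (auto intro: card_image_le[THEN order_trans])
  finally show ?thesis by simp
qed

lemma card_incident_Int_le:
  assumes "i \<noteq> j"
  shows "card (incident N i \<inter> incident N j) \<le> 1"
proof -
  have "incident N i \<inter> incident N j \<subseteq> {(min i j, max i j)}"
    using assms by (auto simp: incident_def pairs_def)
  then show ?thesis
    using card_mono[of "{(min i j, max i j)}"] by fastforce
qed

lemma card_isolated_le_sol_frac:
  assumes "1 < a"
  shows "real (card {i \<in> {..<N}. \<forall>p\<in>incident N i. t < \<omega> p}) \<le> real N * sol_frac N a t \<omega>"
proof -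
  have "{i \<in> {..<N}. \<forall>p\<in>incident N i. t < \<omega> p}
      \<subseteq> {i \<in> {..<N}. real (card (cluster (links N a t \<omega>) i)) < a}" (is "?S \<subseteq> ?T")
  proof
    fix i assume "i \<in> ?S"
    then have "\<forall>p\<in>links N a t \<omega>. fst p \<noteq> i \<and> snd p \<noteq> i"
      using links_subset_rung[of N a t \<omega>] by (force simp: incident_def)
    then show "i \<in> ?T"
      using assms \<open>i \<in> ?S\<close> by (simp add: cluster_eq_singleton)
  qed
  then have "card {i \<in> {..<N}. \<forall>p\<in>incident N i. t < \<omega> p}
      \<le> card {i \<in> {..<N}. real (card (cluster (links N a t \<omega>) i)) < a}"
    by (intro card_mono) auto
  then show ?thesis
    by (cases "N = 0") (auto simp: sol_frac_def atLeast0LessThan)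
qed

lemma measurable_insort_key:
  fixes k :: "'b \<Rightarrow> 'a::countable \<Rightarrow> real"
  assumes [measurable]: "\<And>p. (\<lambda>\<omega>. k \<omega> p) \<in> borel_measurable M"
  shows "(\<lambda>\<omega>. insort_key (k \<omega>) x ys) \<in> measurable M (count_space UNIV)"
proof (induction ys)
  case (Cons y ys)
  note [measurable] = Cons.IH
  show ?case by simp measurable
qed simp

lemma measurable_sort_key:
  fixes k :: "'b \<Rightarrow> 'a::countable \<Rightarrow> real"
  assumes "\<And>p. (\<lambda>\<omega>. k \<omega> p) \<in> borel_measurable M"
  shows "(\<lambda>\<omega>. sort_key (k \<omega>) xs) \<in> measurable M (count_space UNIV)"
proof (induction xs)
  case (Cons x xs)
  have "(\<lambda>\<omega>. insort_key (k \<omega>) x (sort_key (k \<omega>) xs)) \<in> measurable M (count_space UNIV)"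
    by (rule measurable_compose_countable'[OF measurable_insort_key[OF assms] Cons.IH]) simp
  then show ?case by simp
qed simp

lemma measurable_filter_le:
  fixes k :: "'b \<Rightarrow> 'a::countable \<Rightarrow> real"
  assumes [measurable]: "\<And>p. (\<lambda>\<omega>. k \<omega> p) \<in> borel_measurable M"
  shows "(\<lambda>\<omega>. filter (\<lambda>p. k \<omega> p \<le> t) xs) \<in> measurable M (count_space UNIV)"
proof (induction xs)
  case (Cons x xs)
  note [measurable] = Cons.IH
  show ?case by simp measurable
qed simp

lemma measurable_clock:
  "(\<lambda>\<omega>. \<omega> p) \<in> borel_measurable (clocks N)"
proof (cases "p \<in> pairs N")
  case False
  then have "\<omega> p = undefined" if "\<omega> \<in> space (clocks N)" for \<omega>
    using that by (cases p) (auto simp: clocks_def space_PiM PiE_def extensional_def)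
  then show ?thesis
    by (intro measurable_cong[THEN iffD2, OF _ measurable_const]) auto
qed (simp add: clocks_def)

lemma measurable_sol_frac: "sol_frac N a t \<in> borel_measurable (clocks N)"
proof -
  have "(\<lambda>\<omega>. sort_key \<omega> (filter (\<lambda>p. \<omega> p \<le> t) xs)) \<in> measurable (clocks N) (count_space UNIV)"
    for xs :: "(nat \<times> nat) list"
    by (rule measurable_compose_countable'[OF measurable_sort_key measurable_filter_le])
       (use measurable_clock in auto)
  then show ?thesis
    unfolding sol_frac_def links_def by (rule measurable_compose[where N="count_space UNIV"]) simp
qed

lemma prob_exponential_greater:
  assumes "0 < l" "0 \<le> t"
  shows "measure (density lborel (exponential_density l)) {t<..} = exp (- t * l)"
proof -
  interpret D: prob_space "density lborel (exponential_density l)"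
    using prob_space_exponential_density[OF assms(1)] .
  have "emeasure (density lborel (exponential_density l)) {..t} = ennreal (1 - exp (- l * t))"
    using emeasure_erlang_density[OF assms(1), of 0 t] assms by (simp add: erlang_CDF_0)
  then have "D.prob {..t} = 1 - exp (- l * t)"
    using assms by (simp add: D.emeasure_eq_measure)
  moreover have "{t<..} = space (density lborel (exponential_density l)) - {..t}" by auto
  ultimately show ?thesis using D.prob_compl[of "{..t}"] by (simp add: mult.commute)
qed

lemma measure_PiM_all_in:
  assumes D: "prob_space D" and I: "finite I" and S: "S \<subseteq> I" and B: "B \<in> sets D"
  shows "measure (PiM I (\<lambda>_. D)) {\<omega> \<in> space (PiM I (\<lambda>_. D)). \<forall>i\<in>S. \<omega> i \<in> B} = measure D B ^ card S"
proof -
  interpret finite_product_prob_space "\<lambda>_. D" I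
    using D I by (simp add: finite_product_prob_space_def finite_product_sigma_finite_def
        finite_product_sigma_finite_axioms_def product_prob_space_def product_prob_space_axioms_def
        product_sigma_finite_def prob_space_imp_sigma_finite)
  have "{\<omega> \<in> space (PiM I (\<lambda>_. D)). \<forall>i\<in>S. \<omega> i \<in> B}
      = Pi\<^sub>E I (\<lambda>i. if i \<in> S then B else space D)"
    using S sets.sets_into_space[OF B] by (auto simp: space_PiM PiE_def Pi_def)
  then have "measure (PiM I (\<lambda>_. D)) {\<omega> \<in> space (PiM I (\<lambda>_. D)). \<forall>i\<in>S. \<omega> i \<in> B}
      = (\<Prod>i\<in>I. measure D (if i \<in> S then B else space D))"
    using B by (simp add: prob_times)
  also have "\<dots> = measure D B ^ card S"
    using I S prob_space.prob_space[OF D] by (simp add: if_distrib prod.If_cases Int_absorb1)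
  finally show ?thesis .
qed

context prob_space
begin

lemma integrable_sum_indicator:
  assumes "\<And>i. i \<in> I \<Longrightarrow> A i \<in> events"
  shows "integrable M (\<lambda>x. \<Sum>i\<in>I. indicator (A i) x :: real)"
  using assms by (intro Bochner_Integration.integrable_sum) (simp add: integrable_indicator_iff emeasure_eq_measure)

lemma expectation_sum_indicator:
  assumes "\<And>i. i \<in> I \<Longrightarrow> A i \<in> events"
  shows "expectation (\<lambda>x. \<Sum>i\<in>I. indicator (A i) x :: real) = (\<Sum>i\<in>I. prob (A i))"
  using assms by (subst Bochner_Integration.integral_sum) (simp_all add: integrable_indicator_iff emeasure_eq_measure)

lemma sum_indicator_square:
  "(\<Sum>i\<in>I. indicator (A i) x :: real)\<^sup>2 = (\<Sum>(i, j)\<in>I \<times> I. indicator (A i \<inter> A j) x)"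
  by (simp add: power2_eq_square sum_product sum.cartesian_product indicator_inter_arith)

lemma prob_sum_indicator_le_half_mean:
  fixes A :: "'i \<Rightarrow> 'a set" and q c :: real
  assumes I: "finite I" "I \<noteq> {}"
    and A: "\<And>i. i \<in> I \<Longrightarrow> A i \<in> events"
    and q: "0 < q" "\<And>i. i \<in> I \<Longrightarrow> q \<le> prob (A i)"
    and c: "0 < c" "c \<le> 1"
    and cov: "\<And>i j. i \<in> I \<Longrightarrow> j \<in> I \<Longrightarrow> i \<noteq> j \<Longrightarrow> prob (A i \<inter> A j) * c \<le> prob (A i) * prob (A j)"
  shows "prob {x \<in> space M. (\<Sum>i\<in>I. indicator (A i) x) \<le> q / 2 * card I}
     \<le> (card I + (real (card I))\<^sup>2 * (1 / c - 1)) / (q * card I / 2)\<^sup>2"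
proof -
  define n where "n = real (card I)"
  define X where "X x = (\<Sum>i\<in>I. indicator (A i) x :: real)" for x
  define m where "m = (\<Sum>i\<in>I. prob (A i))"
  have AA: "A i \<inter> A j \<in> events" if "(i, j) \<in> I \<times> I" for i j
    using A that by auto
  have intX: "integrable M X"
    unfolding X_def by (rule integrable_sum_indicator[OF A])
  have intX2: "integrable M (\<lambda>x. (X x)\<^sup>2)"
    unfolding X_def sum_indicator_square
    using integrable_sum_indicator[of "I \<times> I" "\<lambda>(i, j). A i \<inter> A j"] AA
    by (simp add: case_prod_unfold)
  have EX: "expectation X = m"
    unfolding X_def m_def by (rule expectation_sum_indicator[OF A])
  have "expectation (\<lambda>x. (X x)\<^sup>2) = (\<Sum>(i, j)\<in>I \<times> I. prob (A i \<inter> A j))"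
    unfolding X_def sum_indicator_square
    using expectation_sum_indicator[of "I \<times> I" "\<lambda>(i, j). A i \<inter> A j"] AA
    by (simp add: case_prod_unfold)
  also have "\<dots> = (\<Sum>i\<in>I. \<Sum>j\<in>I. prob (A i \<inter> A j))"
    by (simp add: sum.cartesian_product)
  also have "\<dots> \<le> (\<Sum>i\<in>I. \<Sum>j\<in>I. (if i = j then prob (A i) else 0) + prob (A i) * prob (A j) / c)"
    using cov c by (intro sum_mono) (auto simp: field_simps)
  also have "\<dots> = m + m\<^sup>2 / c"
    using I by (simp add: sum.distrib m_def power2_eq_square sum_product sum_divide_distrib)
  finally have EX2: "expectation (\<lambda>x. (X x)\<^sup>2) \<le> m + m\<^sup>2 / c" .
  have "q * n \<le> m" "m \<le> n"
    using sum_mono[of I "\<lambda>_. q" "\<lambda>i. prob (A i)"] sum_mono[of I "\<lambda>i. prob (A i)" "\<lambda>_. 1"] q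
    by (auto simp: m_def n_def mult.commute)
  have "variance X = expectation (\<lambda>x. (X x)\<^sup>2) - m\<^sup>2"
    using variance_eq[OF intX intX2] EX by simp
  also have "\<dots> \<le> m + m\<^sup>2 * (1 / c - 1)"
    using EX2 by (simp add: field_simps)
  also have "\<dots> \<le> n + n\<^sup>2 * (1 / c - 1)"
    using \<open>m \<le> n\<close> c by (intro add_mono mult_right_mono power_mono) (auto simp: m_def sum_nonneg)
  finally have var: "variance X \<le> n + n\<^sup>2 * (1 / c - 1)" .
  have d: "0 < q * n / 2"
    using q I by (simp add: n_def card_gt_0_iff)
  have "prob {x \<in> space M. X x \<le> q / 2 * n} \<le> prob {x \<in> space M. q * n / 2 \<le> \<bar>X x - expectation X\<bar>}"
    using \<open>q * n \<le> m\<close> EX intX by (intro finite_measure_mono) (auto simp: abs_if)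
  also have "\<dots> \<le> variance X / (q * n / 2)\<^sup>2"
    using intX by (intro Chebyshev_inequality[OF _ intX2 d]) auto
  also have "\<dots> \<le> (n + n\<^sup>2 * (1 / c - 1)) / (q * n / 2)\<^sup>2"
    using var d by (intro divide_right_mono) auto
  finally show ?thesis unfolding X_def n_def .
qed

end

lemma prob_clocks_all_greater:
  assumes N: "0 < N" and t: "0 \<le> t" and S: "S \<subseteq> pairs N"
  shows "measure (clocks N) {\<omega> \<in> space (clocks N). \<forall>p\<in>S. t < \<omega> p} = exp (- t / N) ^ card S"
proof -
  define D where "D = density lborel (exponential_density (1 / real N))"
  have D: "prob_space D"
    unfolding D_def using N by (intro prob_space_exponential_density) simp
  have "measure (clocks N) {\<omega> \<in> space (clocks N). \<forall>p\<in>S. \<omega> p \<in> {t<..}} = measure D {t<..} ^ card S"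
    unfolding clocks_def D_def[symmetric] using D finite_pairs S
    by (intro measure_PiM_all_in) (auto simp: D_def)
  then show ?thesis
    using prob_exponential_greater[of "1 / real N" t] N t by (simp add: D_def)
qed

lemma prob_sol_frac_le_bound:
  assumes N: "0 < N" and t: "0 \<le> t" and a: "1 < a"
  shows "measure (clocks N) {\<omega> \<in> space (clocks N). sol_frac N a t \<omega> \<le> exp (- 2 * t) / 2}
    \<le> 4 / (exp (- 2 * t))\<^sup>2 * (1 / N + (exp (t / N) - 1))"
proof -
  interpret prob_space "clocks N"
    unfolding clocks_def using N by (intro prob_space_PiM prob_space_exponential_density) simp
  define c where "c = exp (- t / N)"
  define q where "q = exp (- 2 * t)"
  define A where "A i = {\<omega> \<in> space (clocks N). \<forall>p\<in>incident N i. t < \<omega> p}" for i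
  have c: "0 < c" "c \<le> 1"
    using t N by (auto simp: c_def)
  have incident_pairs: "incident N i \<subseteq> pairs N" for i
    by (auto simp: incident_def)
  have prob_A: "prob (A i) = c ^ card (incident N i)" for i
    unfolding A_def c_def using prob_clocks_all_greater[OF N t incident_pairs] .
  note [measurable] = measurable_clock
  have A_events [measurable]: "A i \<in> sets (clocks N)" for i
    unfolding A_def using finite_subset[OF incident_pairs finite_pairs] by measurable
  have q_eq: "q = c ^ (2 * N)"
    unfolding c_def q_def using N by (simp add: exp_of_nat_mult[symmetric])
  have q_le: "q \<le> prob (A i)" for i
    unfolding prob_A q_eq using c card_incident_le[of N i] by (intro power_decreasing) auto
  have cov: "prob (A i \<inter> A j) * c \<le> prob (A i) * prob (A j)" if "i \<noteq> j" for i j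
  proof -
    have finite: "finite (incident N i)" for i
      using finite_subset[OF incident_pairs finite_pairs] .
    have "A i \<inter> A j = {\<omega> \<in> space (clocks N). \<forall>p\<in>incident N i \<union> incident N j. t < \<omega> p}"
      by (auto simp: A_def)
    then have "prob (A i \<inter> A j) * c = c ^ (card (incident N i \<union> incident N j) + 1)"
      unfolding c_def using prob_clocks_all_greater[OF N t] incident_pairs by simp
    also have "\<dots> \<le> c ^ (card (incident N i) + card (incident N j))"
      using c card_Un_Int[OF finite finite, of i j] card_incident_Int_le[OF that, of N]
      by (intro power_decreasing) auto
    also have "\<dots> = prob (A i) * prob (A j)"
      by (simp add: prob_A power_add)
    finally show ?thesis .
  qed
  have "{\<omega> \<in> space (clocks N). sol_frac N a t \<omega> \<le> q / 2}
      \<subseteq> {\<omega> \<in> space (clocks N). (\<Sum>i\<in>{..<N}. indicator (A i) \<omega>) \<le> q / 2 * card {..<N}}"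
  proof safe
    fix \<omega> assume \<omega>: "\<omega> \<in> space (clocks N)" and "sol_frac N a t \<omega> \<le> q / 2"
    then have "real N * sol_frac N a t \<omega> \<le> q / 2 * N"
      using N by (simp add: mult.commute mult_left_mono)
    moreover have "(\<Sum>i\<in>{..<N}. indicator (A i) \<omega>) = real (card {i \<in> {..<N}. \<forall>p\<in>incident N i. t < \<omega> p})"
      using \<omega> by (simp add: A_def indicator_def sum.If_cases Int_def)
    ultimately show "(\<Sum>i\<in>{..<N}. indicator (A i) \<omega>) \<le> q / 2 * card {..<N}"
      using card_isolated_le_sol_frac[OF a, of N t \<omega>] by simp
  qed
  then have "prob {\<omega> \<in> space (clocks N). sol_frac N a t \<omega> \<le> q / 2}
      \<le> prob {\<omega> \<in> space (clocks N). (\<Sum>i\<in>{..<N}. indicator (A i) \<omega>) \<le> q / 2 * card {..<N}}"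
    by (intro finite_measure_mono) measurable
  also have "\<dots> \<le> (N + (real N)\<^sup>2 * (1 / c - 1)) / (q * N / 2)\<^sup>2"
    using prob_sum_indicator_le_half_mean[of "{..<N}" A q c] q_le cov c N
    by (simp add: q_def lessThan_empty_iff)
  also have "\<dots> = 4 / q\<^sup>2 * (1 / N + (exp (t / N) - 1))"
    using N by (simp add: c_def q_def exp_minus field_simps power2_eq_square)
  finally show ?thesis unfolding q_def .
qed

theorem lemma2p6:
  fixes \<alpha> :: "nat \<Rightarrow> real"
  assumes "filterlim \<alpha> at_top sequentially"
    and "(\<lambda>N. \<alpha> N / real N) \<longlonglongrightarrow> 0"
    and "(t::real) \<ge> 0"
  shows "\<exists>\<nu>>0. (\<forall>N\<ge>2. {\<omega> \<in> space (clocks N). sol_frac N (\<alpha> N) t \<omega> \<le> \<nu>} \<in> sets (clocks N))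
     \<and> (\<lambda>N. measure (clocks N) {\<omega> \<in> space (clocks N). sol_frac N (\<alpha> N) t \<omega> \<le> \<nu>}) \<longlonglongrightarrow> 0"
proof (intro exI conjI allI impI)
  show "0 < exp (- 2 * t) / 2" by simp
  note [measurable] = measurable_sol_frac
  show "{\<omega> \<in> space (clocks N). sol_frac N (\<alpha> N) t \<omega> \<le> exp (- 2 * t) / 2} \<in> sets (clocks N)" for N
    by measurable
  define B where "B N = 4 / (exp (- 2 * t))\<^sup>2 * (1 / real N + (exp (t / real N) - 1))" for N :: nat
  have inverse_lim: "(\<lambda>N. c / real N) \<longlonglongrightarrow> 0" for c :: real
    by (intro tendsto_divide_0[OF tendsto_const] filterlim_at_top_imp_at_infinity filterlim_real_sequentially)
  have "B \<longlonglongrightarrow> 4 / (exp (- 2 * t))\<^sup>2 * (0 + (exp 0 - 1))"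
    unfolding B_def by (intro tendsto_intros inverse_lim)
  then have B_lim: "B \<longlonglongrightarrow> 0" by simp
  have "\<forall>\<^sub>F N in sequentially. 1 < \<alpha> N \<and> 0 < N"
    using assms(1)[unfolded filterlim_at_top_dense] eventually_gt_at_top[of 0]
    by (auto intro: eventually_conj)
  then have bound: "\<forall>\<^sub>F N in sequentially.
      measure (clocks N) {\<omega> \<in> space (clocks N). sol_frac N (\<alpha> N) t \<omega> \<le> exp (- 2 * t) / 2} \<le> B N"
    by eventually_elim (unfold B_def, rule prob_sol_frac_le_bound, use assms(3) in auto)
  show "(\<lambda>N. measure (clocks N) {\<omega> \<in> space (clocks N). sol_frac N (\<alpha> N) t \<omega> \<le> exp (- 2 * t) / 2}) \<longlonglongrightarrow> 0"
    by (rule tendsto_sandwich[OF _ bound tendsto_const B_lim]) simp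
qed

end
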